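(* Let $n,m\ge 1$ and $N\ge 2$ be integers, let $h:\mathbb{R}^n\to\mathbb{R}^m$ be a function, let $R\in\mathbb{R}^{m\times m}$ be symmetric positive definite, and let $\bm{z}\in\mathbb{R}^m$. Let $\bm{x}_1^f,\dots,\bm{x}_N^f\in\mathbb{R}^n$ be a forecast ensemble with mean $\bar{\bm{x}}^f=\frac1N\sum_i\bm{x}_i^f$ and anomaly matrix $A^f=[\bm{x}_1^f-\bar{\bm{x}}^f,\dots,\bm{x}_N^f-\bar{\bm{x}}^f]\in\mathbb{R}^{n\times N}$, and set $P^f=\frac{1}{N-1}A^f(A^f)^\top$. Let $\bm{z}_i^f=h(\bm{x}_i^f)$, $\bar{\bm{z}}^f=\frac1N\sum_i\bm{z}_i^f$, $\mathcal{Z}^f=[\bm{z}_1^f-\bar{\bm{z}}^f,\dots,\bm{z}_N^f-\bar{\bm{z}}^f]$, $B^f=\bigl(\mathcal{Z}^f(\mathcal{Z}^f)^\top+(N-1)R\bigr)^{-1}$, $K=\frac{1}{N-1}A^f(\mathcal{Z}^f)^\top\bigl(\frac{1}{N-1}\mathcal{Z}^f(\mathcal{Z}^f)^\top+R\bigr)^{-1}$ (so $K=A^f(\mathcal{Z}^f)^\top B^f$), and $\bar{\bm{x}}^a=\bar{\bm{x}}^f+K(\bm{z}-\bar{\bm{z}}^f)$. Define $\bm{x}_i^{rc}=\bar{\bm{x}}^a+(\bm{x}_i^f-\bar{\bm{x}}^f)$, $\bm{z}_i^{rc}=h(\bm{x}_i^{rc})$, $\bar{\bm{z}}^{rc}=\frac1N\sum_i\bm{z}_i^{rc}$,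 $\mathcal{Z}^{rc}=[\bm{z}_1^{rc}-\bar{\bm{z}}^{rc},\dots,\bm{z}_N^{rc}-\bar{\bm{z}}^{rc}]$, $P_{xz}^{rc}=\frac{1}{N-1}A^f(\mathcal{Z}^{rc})^\top$, $S^{rc}=\frac{1}{N-1}\mathcal{Z}^{rc}(\mathcal{Z}^{rc})^\top+R$, $\Gamma^{rc}=\mathcal{Z}^{rc}(\mathcal{Z}^{rc})^\top+(N-1)R$, and $$P^{a,rc}=P^f+KS^{rc}K^\top-K(P_{xz}^{rc})^\top-P_{xz}^{rc}K^\top .$$ Let $T^{rc}\in\mathbb{R}^{N\times N}$ be the symmetric positive semidefinite square root $$T^{rc}=\Bigl(I-(\mathcal{Z}^f)^\top B^f\mathcal{Z}^{rc}-(\mathcal{Z}^{rc})^\top B^f\mathcal{Z}^f+(\mathcal{Z}^f)^\top B^f\Gamma^{rc}B^f\mathcal{Z}^f\Bigr)^{1/2}$$ (the matrix inside is positive semidefinite), and let $\widetilde{A}^a=A^fT^{rc}$. Assume the update is accepted, i.e. $\operatorname{tr}(P^{a,rc})\le\operatorname{tr}(P^f)$. Then $$\frac{1}{N-1}\widetilde{A}^a(\widetilde{A}^a)^\top=P^{a,rc}.$$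
   Context: This is the "recalibrated ensemble transform Kalman filter" analysis step for a measurement model $\bm{z}=h(\bm{x})+\bm{v}$, $\bm{v}\sim\mathcal{N}(\bm{0},R)$; the candidate analysis ensemble is $\bar{\bm{x}}^a\bm{1}^\top+\widetilde{A}^a$. *)

theory Defs
  imports "HOL-Analysis.Analysis"
begin

text \<open>Matrices are rendered as real^'cols^'rows (HOL-Analysis), ensemble members
are indexed by a finite type 'N with CARD('N) = N.\<close>

definition ens_mean :: "('N::finite \<Rightarrow> real^'d) \<Rightarrow> real^'d" where
  "ens_mean x = (1 / real CARD('N)) *\<^sub>R (\<Sum>i\<in>UNIV. x i)"

definition anomaly :: "('N::finite \<Rightarrow> real^'d) \<Rightarrow> real^'N^'d" where
  "anomaly x = (\<chi> r c. (x c - ens_mean x) $ r)"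

definition sym_mat :: "real^'k^'k \<Rightarrow> bool" where
  "sym_mat M \<longleftrightarrow> transpose M = M"

definition pos_def :: "real^'k^'k \<Rightarrow> bool" where
  "pos_def M \<longleftrightarrow> (\<forall>v. v \<noteq> 0 \<longrightarrow> v \<bullet> (M *v v) > 0)"

definition pos_semidef :: "real^'k^'k \<Rightarrow> bool" where
  "pos_semidef M \<longleftrightarrow> (\<forall>v. v \<bullet> (M *v v) \<ge> 0)"

end

theory Submission
  imports Defs
begin

text \<open>Since B^f is symmetric and the two expressions for K agree once the factor N - 1
  is pulled out of the inverse, K = A^f (Z^f)^T B^f. Sandwiching the defining identity for
  T^2 between A^f and (A^f)^T then turns its four terms into A^f (A^f)^T, K Z^rc (A^f)^T, its
  transpose and K \<Gamma>^rc K^T; dividing by N - 1 and using \<Gamma>^rc = (N - 1) S^rc gives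
  exactly the four terms of P^(a,rc).\<close>

lemma matrix_add_rdistrib: "((A::'a::semiring_1^'n^'m) + B) ** C = A ** C + B ** C"
  by (simp add: matrix_matrix_mult_def vec_eq_iff algebra_simps sum.distrib)

lemma matrix_diff_ldistrib: "(A::'a::ring_1^'n^'m) ** (B - C) = A ** B - A ** C"
  by (simp add: matrix_matrix_mult_def vec_eq_iff algebra_simps sum_subtractf)

lemma matrix_diff_rdistrib: "((A::'a::ring_1^'n^'m) - B) ** C = A ** C - B ** C"
  by (simp add: matrix_matrix_mult_def vec_eq_iff algebra_simps sum_subtractf)

lemma transpose_add: "transpose (A + B) = transpose A + transpose (B::'a::semiring_1^'n^'m)"
  by (simp add: transpose_def vec_eq_iff)

lemma
  fixes A :: "'a::semiring_1^'n^'m"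
  assumes "invertible A"
  shows matrix_inv_right: "A ** matrix_inv A = mat 1"
    and matrix_inv_left: "matrix_inv A ** A = mat 1"
  using someI_ex[of "\<lambda>A'. A ** A' = mat 1 \<and> A' ** A = mat 1"] assms
  unfolding invertible_def matrix_inv_def by auto

lemma matrix_inv_eqI:
  fixes A X :: "'a::semiring_1^'n^'n"
  assumes "invertible A" and "A ** X = mat 1"
  shows "matrix_inv A = X"
  by (metis assms matrix_inv_left matrix_mul_assoc matrix_mul_lid matrix_mul_rid)

lemma matrix_inv_scaleR:
  fixes A :: "real^'n^'n"
  assumes "k \<noteq> 0" and "invertible A"
  shows "matrix_inv (k *\<^sub>R A) = (1 / k) *\<^sub>R matrix_inv A"
  using assms
  by (intro matrix_inv_eqI scalar_invertible)
     (simp_all add: matrix_scalar_ac scalar_matrix_assoc[symmetric] matrix_inv_right)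

lemma matrix_inv_transpose:
  fixes A :: "real^'n^'n"
  assumes "invertible A"
  shows "matrix_inv (transpose A) = transpose (matrix_inv A)"
proof (rule matrix_inv_eqI)
  show "invertible (transpose A)"
    using assms by (metis invertible_def matrix_transpose_mul transpose_mat)
  show "transpose A ** transpose (matrix_inv A) = mat 1"
    using assms by (metis matrix_inv_left matrix_transpose_mul transpose_mat)
qed

lemma pos_def_imp_invertible:
  fixes M :: "real^'n^'n"
  assumes "pos_def M"
  shows "invertible M"
proof -
  have "x = 0" if "M *v x = 0" for x
    using assms that unfolding pos_def_def by force
  then show ?thesis
    using matrix_left_invertible_ker invertible_left_inverse by blast
qed

lemma inner_gram_matrix:
  fixes Z :: "real^'k^'m"
  shows "v \<bullet> ((Z ** transpose Z) *v v) = (transpose Z *v v) \<bullet> (transpose Z *v v)"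
  by (metis dot_lmul_matrix matrix_vector_mul_assoc transpose_matrix_vector)

lemma pos_def_gram_plus:
  fixes Z :: "real^'k^'m" and R :: "real^'m^'m"
  assumes "pos_def R" and "c > 0"
  shows "pos_def (Z ** transpose Z + c *\<^sub>R R)"
  unfolding pos_def_def
proof (intro allI impI)
  fix v :: "real^'m"
  assume "v \<noteq> 0"
  then have "v \<bullet> (R *v v) > 0"
    using assms(1) unfolding pos_def_def by blast
  moreover have "v \<bullet> ((Z ** transpose Z + c *\<^sub>R R) *v v)
      = (transpose Z *v v) \<bullet> (transpose Z *v v) + c * (v \<bullet> (R *v v))"
    by (simp add: matrix_vector_mult_add_rdistrib inner_gram_matrix inner_add_right
        scaleR_matrix_vector_assoc[symmetric])
  ultimately show "v \<bullet> ((Z ** transpose Z + c *\<^sub>R R) *v v) > 0"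
    using assms(2) by (simp add: add_nonneg_pos)
qed

lemma symmetric_gram_plus:
  fixes Z :: "real^'k^'m" and R :: "real^'m^'m"
  assumes "sym_mat R"
  shows "transpose (Z ** transpose Z + c *\<^sub>R R) = Z ** transpose Z + c *\<^sub>R R"
  using assms unfolding sym_mat_def
  by (simp add: transpose_add transpose_scalar matrix_transpose_mul)

lemma kalman_gain_scaling:
  fixes A :: "real^'N^'n" and Z :: "real^'N^'m" and R :: "real^'m^'m"
  assumes "pos_def R" and "c > 0"
  shows "(1 / c) *\<^sub>R (A ** transpose Z) ** matrix_inv ((1 / c) *\<^sub>R (Z ** transpose Z) + R)
       = A ** transpose Z ** matrix_inv (Z ** transpose Z + c *\<^sub>R R)"
proof -
  have "(1 / c) *\<^sub>R (Z ** transpose Z) + R = (1 / c) *\<^sub>R (Z ** transpose Z + c *\<^sub>R R)"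
    using assms(2) by (simp add: scaleR_add_right)
  then show ?thesis
    using assms
    by (simp add: matrix_inv_scaleR pos_def_imp_invertible pos_def_gram_plus matrix_scalar_ac)
qed

lemma square_root_update_expansion:
  fixes A :: "real^'N^'n" and Z W :: "real^'N^'m" and B G :: "real^'m^'m" and T :: "real^'N^'N"
  assumes "transpose T = T" and "transpose B = B"
    and "T ** T = mat 1 - transpose Z ** B ** W - transpose W ** B ** Z
                  + transpose Z ** B ** G ** B ** Z"
  defines "K \<equiv> A ** transpose Z ** B"
  shows "(A ** T) ** transpose (A ** T)
       = A ** transpose A - K ** W ** transpose A - A ** transpose W ** transpose K
         + K ** G ** transpose K"
proof -
  have K_transpose: "transpose K = B ** Z ** transpose A"
    unfolding K_def using assms(2) by (simp add: matrix_transpose_mul matrix_mul_assoc)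
  have "(A ** T) ** transpose (A ** T) = A ** (T ** T) ** transpose A"
    using assms(1) by (simp add: matrix_transpose_mul matrix_mul_assoc)
  also have "\<dots> = A ** transpose A - K ** W ** transpose A - A ** transpose W ** transpose K
         + K ** G ** transpose K"
    unfolding assms(3) K_transpose unfolding K_def
    by (simp add: matrix_diff_ldistrib matrix_diff_rdistrib matrix_add_rdistrib
        matrix_add_ldistrib matrix_mul_assoc)
  finally show ?thesis .
qed

theorem proposition2:
  fixes h :: "real^'n::finite \<Rightarrow> real^'m::finite"
    and R :: "real^'m^'m"
    and z :: "real^'m"
    and xf :: "'N::finite \<Rightarrow> real^'n"
    and T :: "real^'N^'N"
  assumes N2: "CARD('N) \<ge> 2"
    and R_sym: "sym_mat R" and R_pd: "pos_def R"
  defines "xbf \<equiv> ens_mean xf"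
  defines "Af \<equiv> anomaly xf"
  defines "Pf \<equiv> (1 / (real CARD('N) - 1)) *\<^sub>R (Af ** transpose Af)"
  defines "zbf \<equiv> ens_mean (\<lambda>i. h (xf i))"
  defines "Zf \<equiv> anomaly (\<lambda>i. h (xf i))"
  defines "Bf \<equiv> matrix_inv (Zf ** transpose Zf + (real CARD('N) - 1) *\<^sub>R R)"
  defines "K \<equiv> (1 / (real CARD('N) - 1)) *\<^sub>R (Af ** transpose Zf) **
               matrix_inv ((1 / (real CARD('N) - 1)) *\<^sub>R (Zf ** transpose Zf) + R)"
  defines "xba \<equiv> xbf + K *v (z - zbf)"
  defines "xrc \<equiv> (\<lambda>i. xba + (xf i - xbf))"
  defines "Zrc \<equiv> anomaly (\<lambda>i. h (xrc i))"
  defines "Pxz \<equiv> (1 / (real CARD('N) - 1)) *\<^sub>R (Af ** transpose Zrc)"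
  defines "Src \<equiv> (1 / (real CARD('N) - 1)) *\<^sub>R (Zrc ** transpose Zrc) + R"
  defines "Grc \<equiv> Zrc ** transpose Zrc + (real CARD('N) - 1) *\<^sub>R R"
  defines "Parc \<equiv> Pf + K ** Src ** transpose K - K ** transpose Pxz - Pxz ** transpose K"
  assumes T_sym: "sym_mat T" and T_psd: "pos_semidef T"
    and T_sq: "T ** T = mat 1 - transpose Zf ** Bf ** Zrc - transpose Zrc ** Bf ** Zf
                        + transpose Zf ** Bf ** Grc ** Bf ** Zf"
    and accepted: "trace Parc \<le> trace Pf"
  shows "(1 / (real CARD('N) - 1)) *\<^sub>R ((Af ** T) ** transpose (Af ** T)) = Parc"
proof -
  define c where "c = real CARD('N) - 1"
  have c_pos: "c > 0" using N2 unfolding c_def by simp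
  have Bf_sym: "transpose Bf = Bf"
    unfolding Bf_def c_def[symmetric]
    using R_sym R_pd c_pos
    by (simp add: matrix_inv_transpose[symmetric] symmetric_gram_plus
        pos_def_imp_invertible pos_def_gram_plus)
  have K_eq: "K = Af ** transpose Zf ** Bf"
    unfolding K_def Bf_def c_def[symmetric] using kalman_gain_scaling[OF R_pd c_pos] .
  have "(Af ** T) ** transpose (Af ** T) = Af ** transpose Af - K ** Zrc ** transpose Af
      - Af ** transpose Zrc ** transpose K + K ** Grc ** transpose K"
    using square_root_update_expansion[OF _ Bf_sym T_sq] T_sym
    unfolding K_eq sym_mat_def by simp
  moreover have "Grc = c *\<^sub>R Src"
    unfolding Grc_def Src_def c_def[symmetric] using c_pos by (simp add: scaleR_add_right)
  ultimately show ?thesis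
    unfolding Parc_def Pf_def Pxz_def c_def[symmetric] using c_pos
    by (simp add: scaleR_diff_right scaleR_add_right transpose_scalar matrix_transpose_mul
        matrix_scalar_ac scalar_matrix_assoc[symmetric] matrix_mul_assoc)
qed

end
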